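(* Let $P:\mathbb{R}^d\to\mathbb{R}$ be a positive homogeneous function and let $\mathrm{Sym}(P)=\{O\in\mathrm{End}(\mathbb{R}^d): P(O\xi)=P(\xi)\text{ for all }\xi\in\mathbb{R}^d\}$. Then $\mathrm{Sym}(P)$ is a compact subgroup of the general linear group $\mathrm{GL}(\mathbb{R}^d)$.
   Context: For $E\in\mathrm{End}(\mathbb{R}^d)$ and $t>0$ set $t^E:=\exp(\log(t)E)=\sum_{k\ge 0}\frac{(\log t)^k}{k!}E^k$. A function $P:\mathbb{R}^d\to\mathbb{C}$ is homogeneous with respect to $E$ if $P(t^E\xi)=tP(\xi)$ for all $t>0$, $\xi\in\mathbb{R}^d$; the exponent set $\mathrm{Exp}(P)$ is the set of all such $E$. A real-valued $P$ is positive definite if $P\ge 0$ and $P(\xi)=0$ only when $\xi=0$. A function $P:\mathbb{R}^d\to\mathbb{R}$ is positive homogeneous if it is continuous, positive definite, $\mathrm{Exp}(P)\neq\emptyset$, and its unital level set $S_P=\{\eta\in\mathbb{R}^d:P(\eta)=1\}$ is compact. (Known fact that may be used: a continuous positive definite $P$ with nonempty exponent set is positive homogeneous iff $\lim_{|\xi|\to\infty}P(\xi)=\infty$, iff $\lim_{t\to 0}\|t^E\|=0$ for every $E\in\mathrm{Exp}(P)$.) *)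

theory Defs
  imports "HOL-Analysis.Analysis"
begin

primrec matpow :: "real^'n^'n \<Rightarrow> nat \<Rightarrow> real^'n^'n" where
  "matpow E 0 = mat 1"
| "matpow E (Suc k) = E ** matpow E k"

text \<open>t^E = exp(log(t) E) = sum over k of (log t)^k / k! E^k\<close>
definition tpow :: "real \<Rightarrow> real^'n^'n \<Rightarrow> real^'n^'n" where
  "tpow t E = (\<Sum>k. ((ln t) ^ k / fact k) *\<^sub>R matpow E k)"

definition homogeneous_wrt :: "(real^'n \<Rightarrow> real) \<Rightarrow> real^'n^'n \<Rightarrow> bool" where
  "homogeneous_wrt P E \<longleftrightarrow> (\<forall>t>0. \<forall>\<xi>. P (tpow t E *v \<xi>) = t * P \<xi>)"

definition Exp :: "(real^'n \<Rightarrow> real) \<Rightarrow> (real^'n^'n) set" where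
  "Exp P = {E. homogeneous_wrt P E}"

definition positive_definite :: "(real^'n \<Rightarrow> real) \<Rightarrow> bool" where
  "positive_definite P \<longleftrightarrow> (\<forall>\<xi>. P \<xi> \<ge> 0) \<and> (\<forall>\<xi>. P \<xi> = 0 \<longrightarrow> \<xi> = 0)"

definition positive_homogeneous :: "(real^'n \<Rightarrow> real) \<Rightarrow> bool" where
  "positive_homogeneous P \<longleftrightarrow> continuous_on UNIV P \<and> positive_definite P
     \<and> Exp P \<noteq> {} \<and> compact {\<eta>. P \<eta> = 1}"

definition Sym :: "(real^'n \<Rightarrow> real) \<Rightarrow> (real^'n^'n) set" where
  "Sym P = {M. \<forall>\<xi>. P (M *v \<xi>) = P \<xi>}"

end

theory Submission
  imports Defs
begin

text \<open>Sym P is a group for any P vanishing only at 0, and it is closed when P is continuous.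
  Boundedness is the real content: every M in Sym P maps the level set S = {P = 1} into itself,
  and S lies in an annulus \<open>\<delta> \<le> |\<xi>| \<le> R\<close>. Homogeneity yields a ball on which P > 1, so every
  point \<eta> of that ball has a multiple \<open>s \<eta>\<close>, \<open>0 < s \<le> 1\<close>, in S, whence \<open>|M \<eta>| \<le> R |\<eta>| / \<delta>\<close>.
  A uniform bound of \<open>M \<eta>\<close> over a ball bounds the entries of M.\<close>

lemma continuous_on_matrix_vector_mult_right:
  "continuous_on S (\<lambda>M::real^'n^'m. M *v x)"
proof -
  have "linear (\<lambda>M::real^'n^'m. M *v x)"
  proof (rule linearI)
    fix A B :: "real^'n^'m" and c :: real
    show "(A + B) *v x = A *v x + B *v x"
      by (rule matrix_vector_mult_add_rdistrib)
    show "(c *\<^sub>R A) *v x = c *\<^sub>R (A *v x)"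
      by (simp add: matrix_vector_mult_def vec_eq_iff sum_distrib_left mult.assoc)
  qed
  then show ?thesis
    by (simp add: linear_continuous_on linear_conv_bounded_linear)
qed

lemma closed_Sym:
  assumes "continuous_on UNIV P"
  shows "closed (Sym P)"
proof -
  have "Sym P = (\<Inter>\<xi>. {M. P (M *v \<xi>) = P \<xi>})"
    by (auto simp: Sym_def)
  moreover have "closed {M. P (M *v \<xi>) = P \<xi>}" for \<xi>
    by (rule closed_Collect_eq)
      (auto intro: continuous_on_compose2[OF assms continuous_on_matrix_vector_mult_right])
  ultimately show ?thesis
    by auto
qed

lemma mat_1_in_Sym: "mat 1 \<in> Sym P"
  by (simp add: Sym_def)

lemma Sym_mult_closed: "A \<in> Sym P \<Longrightarrow> B \<in> Sym P \<Longrightarrow> A ** B \<in> Sym P"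
  by (simp add: Sym_def flip: matrix_vector_mul_assoc)

lemma Sym_invertible:
  assumes "\<And>\<xi>. P \<xi> = P 0 \<Longrightarrow> \<xi> = 0" and "A \<in> Sym P"
  shows "invertible A"
proof -
  have "x = 0" if "A *v x = 0" for x
    using assms that by (simp add: Sym_def) (metis matrix_vector_mult_0_right)
  then show ?thesis
    by (meson invertible_left_inverse matrix_left_invertible_ker)
qed

lemma matrix_inv_in_Sym:
  assumes "invertible A" and "A \<in> Sym P"
  shows "matrix_inv A \<in> Sym P"
proof -
  have "A ** matrix_inv A = mat 1"
    using assms(1) unfolding invertible_def matrix_inv_def by (rule someI_ex[THEN conjunct1])
  then have "A *v (matrix_inv A *v x) = x" for x
    by (simp add: matrix_vector_mul_assoc)
  moreover have "P (A *v y) = P y" for y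
    using assms(2) by (simp add: Sym_def)
  ultimately show ?thesis
    by (simp add: Sym_def) metis
qed

lemma homogeneous_wrt_zero:
  assumes "homogeneous_wrt P E"
  shows "P 0 = 0"
  using assms[unfolded homogeneous_wrt_def, rule_format, of 2 0] by simp

lemma positive_homogeneous_zero:
  assumes "positive_homogeneous P"
  shows "P 0 = 0"
  using assms by (auto simp: positive_homogeneous_def Exp_def intro: homogeneous_wrt_zero)

lemma homogeneous_wrt_attains:
  assumes "homogeneous_wrt P E" and "c > 0" and "P \<xi> > 0"
  shows "P (tpow (c / P \<xi>) E *v \<xi>) = c"
  using assms by (simp add: homogeneous_wrt_def)

lemma level_set_norm_lower_bound:
  fixes P :: "'a::real_normed_vector \<Rightarrow> real"
  assumes "continuous_on UNIV P" and "P 0 = 0"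
  obtains \<delta> where "\<delta> > 0" and "\<And>\<xi>. P \<xi> = 1 \<Longrightarrow> \<delta> \<le> norm \<xi>"
proof -
  obtain \<delta> where "\<delta> > 0" and \<delta>: "\<And>\<xi>. dist \<xi> 0 < \<delta> \<Longrightarrow> dist (P \<xi>) (P 0) < 1"
    using assms(1) unfolding continuous_on_iff by (metis UNIV_I zero_less_one)
  moreover have "\<delta> \<le> norm \<xi>" if "P \<xi> = 1" for \<xi>
    using \<delta>[of \<xi>] that assms(2) by (force simp: dist_real_def)
  ultimately show ?thesis
    using that by blast
qed

lemma norm_Sym_mult_le:
  fixes P :: "real^'n \<Rightarrow> real"
  assumes "continuous_on UNIV P" and "P 0 = 0" and "M \<in> Sym P" and "P \<eta> \<ge> 1"
    and "\<delta> > 0" and lower: "\<And>\<xi>. P \<xi> = 1 \<Longrightarrow> \<delta> \<le> norm \<xi>"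
    and upper: "\<And>\<xi>. P \<xi> = 1 \<Longrightarrow> norm \<xi> \<le> R"
  shows "\<delta> * norm (M *v \<eta>) \<le> R * norm \<eta>"
proof -
  have "continuous_on {0..1} (\<lambda>s::real. P (s *\<^sub>R \<eta>))"
    by (rule continuous_on_compose2[OF assms(1)]) (auto intro!: continuous_intros)
  then obtain s where s: "0 \<le> s" "s \<le> 1" "P (s *\<^sub>R \<eta>) = 1"
    using IVT'[of "\<lambda>s. P (s *\<^sub>R \<eta>)" 0 1 1] assms(2,4) by auto
  have "\<delta> \<le> s * norm \<eta>"
    using lower[OF s(3)] s(1) by simp
  then have "\<delta> * norm (M *v \<eta>) \<le> s * norm \<eta> * norm (M *v \<eta>)"
    by (simp add: mult_right_mono)
  also have "\<dots> = norm \<eta> * norm (M *v (s *\<^sub>R \<eta>))"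
    using s(1) by (simp add: matrix_vector_mult_scaleR)
  also have "\<dots> \<le> norm \<eta> * R"
    using upper assms(3) s(3) by (intro mult_left_mono) (auto simp: Sym_def)
  finally show ?thesis
    by (simp add: mult.commute)
qed

lemma bounded_matrices_if_bounded_on_ball:
  fixes A :: "(real^'n^'m) set"
  assumes "r > 0" and bound: "\<And>M \<eta>. M \<in> A \<Longrightarrow> dist \<eta> a < r \<Longrightarrow> norm (M *v \<eta>) \<le> C"
  shows "bounded A"
proof -
  have entry: "\<bar>M $ k $ j\<bar> \<le> 4 * C / r" if "M \<in> A" for M k j
  proof -
    define v :: "real^'n" where "v = (r/2) *\<^sub>R axis j 1"
    have "norm (M *v (a + v)) \<le> C" and "norm (M *v a) \<le> C"
      using bound[OF that] \<open>r > 0\<close> by (simp_all add: v_def dist_norm)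
    moreover have "M *v v = M *v (a + v) - M *v a"
      by (simp add: matrix_vector_right_distrib)
    ultimately have "norm (M *v v) \<le> 2 * C"
      by (metis mult_2 norm_triangle_ineq4 add_mono order_trans)
    moreover have "M *v v = (r/2) *\<^sub>R (M *v axis j 1)"
      by (simp add: v_def matrix_vector_mult_scaleR)
    ultimately have "norm (M *v axis j 1) \<le> 4 * C / r"
      using \<open>r > 0\<close> by (simp add: field_simps)
    moreover have "(M *v axis j 1) $ k = M $ k $ j"
      by (simp add: matrix_vector_mult_basis column_def)
    ultimately show ?thesis
      by (metis component_le_norm_cart order_trans)
  qed
  have "norm M \<le> real CARD('m) * (real CARD('n) * (4 * C / r))" if "M \<in> A" for M
  proof -
    have "norm M \<le> (\<Sum>k\<in>UNIV. norm (M $ k))"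
      by (simp add: norm_vec_def L2_set_le_sum)
    also have "\<dots> \<le> (\<Sum>k\<in>(UNIV::'m set). \<Sum>j\<in>(UNIV::'n set). 4 * C / r)"
      by (intro sum_mono order_trans[OF norm_le_l1_cart] entry[OF that])
    finally show ?thesis
      by simp
  qed
  then show ?thesis
    unfolding bounded_iff by blast
qed

lemma positive_homogeneous_exceeds_one_on_ball:
  fixes P :: "real^'n \<Rightarrow> real"
  assumes "positive_homogeneous P"
  obtains a r where "r > 0" and "\<And>\<eta>. dist \<eta> a < r \<Longrightarrow> P \<eta> \<ge> 1"
proof -
  obtain E where E: "homogeneous_wrt P E"
    using assms by (auto simp: positive_homogeneous_def Exp_def)
  obtain i :: 'n where True by blast
  have "P (axis i 1) > 0"
    using assms by (metis positive_homogeneous_def positive_definite_def axis_eq_0_iff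
        zero_neq_one less_eq_real_def)
  then have "P (tpow (2 / P (axis i 1)) E *v axis i 1) = 2"
    using E by (simp add: homogeneous_wrt_attains)
  moreover have "continuous_on UNIV P"
    using assms by (simp add: positive_homogeneous_def)
  ultimately obtain r where "r > 0" and "\<And>\<eta>. dist \<eta> (tpow (2 / P (axis i 1)) E *v axis i 1) < r
      \<Longrightarrow> dist (P \<eta>) 2 < 1"
    unfolding continuous_on_iff by (metis UNIV_I zero_less_one)
  then show ?thesis
    using that by (fastforce simp: dist_real_def)
qed

lemma bounded_Sym:
  fixes P :: "real^'n \<Rightarrow> real"
  assumes "positive_homogeneous P"
  shows "bounded (Sym P)"
proof -
  have cont: "continuous_on UNIV P" and "bounded {\<eta>. P \<eta> = 1}"
    using assms by (auto simp: positive_homogeneous_def compact_imp_bounded)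
  then obtain R where "R > 0" and upper: "\<And>\<xi>. P \<xi> = 1 \<Longrightarrow> norm \<xi> \<le> R"
    unfolding bounded_pos by auto
  have P0: "P 0 = 0"
    using assms by (rule positive_homogeneous_zero)
  obtain \<delta> where "\<delta> > 0" and lower: "\<And>\<xi>. P \<xi> = 1 \<Longrightarrow> \<delta> \<le> norm \<xi>"
    using level_set_norm_lower_bound[OF cont P0] by blast
  obtain a r where "r > 0" and ball: "\<And>\<eta>. dist \<eta> a < r \<Longrightarrow> P \<eta> \<ge> 1"
    using positive_homogeneous_exceeds_one_on_ball[OF assms] by blast
  have "norm (M *v \<eta>) \<le> R * (norm a + r) / \<delta>" if "M \<in> Sym P" and "dist \<eta> a < r" for M \<eta>
  proof -
    have "\<delta> * norm (M *v \<eta>) \<le> R * norm \<eta>"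
      using norm_Sym_mult_le[OF cont P0 \<open>M \<in> Sym P\<close> ball[OF \<open>dist \<eta> a < r\<close>] \<open>\<delta> > 0\<close> lower upper] .
    also have "\<dots> \<le> R * (norm a + r)"
      using that(2) norm_triangle_ineq2[of \<eta> a] \<open>R > 0\<close> by (simp add: dist_norm)
    finally show ?thesis
      using \<open>\<delta> > 0\<close> by (simp add: field_simps)
  qed
  then show ?thesis
    using bounded_matrices_if_bounded_on_ball[OF \<open>r > 0\<close>] by blast
qed

theorem mainTheorem1:
  fixes P :: "real^'n \<Rightarrow> real"
  assumes "positive_homogeneous P"
  shows "compact (Sym P)
    \<and> Sym P \<subseteq> {A. invertible A}
    \<and> mat 1 \<in> Sym P
    \<and> (\<forall>A\<in>Sym P. \<forall>B\<in>Sym P. A ** B \<in> Sym P)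
    \<and> (\<forall>A\<in>Sym P. matrix_inv A \<in> Sym P)"
proof -
  have cont: "continuous_on UNIV P" and pd: "positive_definite P"
    using assms by (auto simp: positive_homogeneous_def)
  have "\<xi> = 0" if "P \<xi> = P 0" for \<xi>
    using pd that positive_homogeneous_zero[OF assms] by (simp add: positive_definite_def)
  then have invertible: "Sym P \<subseteq> {A. invertible A}"
    using Sym_invertible by blast
  have "compact (Sym P)"
    unfolding compact_eq_bounded_closed
    using bounded_Sym[OF assms] closed_Sym[OF cont] by blast
  moreover have "\<forall>A\<in>Sym P. matrix_inv A \<in> Sym P"
    using invertible matrix_inv_in_Sym by blast
  ultimately show ?thesis
    using invertible mat_1_in_Sym Sym_mult_closed by blast
qed

end
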